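(* Let $\mathcal T$ be a set of at least two binary trees over $L$, let $\mathcal F=\{C_1,\dots,C_k\}$ be an acyclic agreement forest for $\mathcal T$ indexed so that $(C_1,\dots,C_k)$ is a topological ordering of $G(\mathcal T,\mathcal F)$, and let $\sigma$ be a leaf ordering such that for all $i<j$, every $l\in L(C_i)\setminus\{\rho\}$ satisfies $\sigma(l)<\sigma(l')$ for every $l'\in L(C_j)\setminus\{\rho\}$. Fix $i$ with $L(C_i)\setminus\{\rho\}\ne\emptyset$, let $l_s$ be the $\sigma$-first leaf of $L(C_i)\setminus\{\rho\}$, and let $l_j\in L(C_i)$ with $j\ge s$. Then for every $T\in\mathcal T$ there is a vertex $x$ of $T^j$ such that the subtree $(T^j)_x$ is (label-preservingly) isomorphic to $C_i|_{\{l_s,\dots,l_j\}\cap L(C_i)}$, and the vertices of these subtrees are indexed identically across $\mathcal T$: if $T,T'\in\mathcal T$ with corresponding vertices $x,x'$, and $v\in V((T^j)_x)$, $v'\in V((T'^j)_{x'})$ satisfy $L((T^j)_v)=L((T'^j)_{v'})$, then $\sigma(v)=\sigma(v')$ (indices computed in $T^j$ and $T'^j$ respectively).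
   Context: Trees. Fix a finite label set $L$ containing a distinguished label $\rho$, and let $n=|L\setminus\{\rho\}|$. A (planted, binary phylogenetic) tree $T$ over $L$ is a rooted tree whose top vertex is labeled $\rho$ and has exactly one child $r(T)$ (the root), in which every other non-leaf vertex has exactly two children, and whose leaves are bijectively labeled by $L\setminus\{\rho\}$; vertices are identified with their labels. For a vertex $v$, $T_v$ is the subtree rooted at $v$ and $cl(v)=L(T_v)$ is its cluster ($L(\cdot)$ denotes the set of labels of a tree). For $S\subseteq L$, $T(S)$ is the smallest subtree of $T$ containing all vertices labeled by $S$, and $T|_S$ is obtained from $T(S)$ by suppressing all unlabeled vertices with fewer than two children. OLA indexing. A leaf ordering is a bijection $\sigma:L\setminus\{\rho\}\to\{0,\dots,n-1\}$; write $l_i=\sigma^{-1}(i)$. For a binary tree $T$ whose non-$\rho$ labels lie in $L\setminus\{\rho\}$ and a vertex $v\ne\rho$, let $\mu(v)=\min\{\sigma(l): l\in L(T_v)\setminus\{\rho\}\}$; each leaf $l$ gets index $\sigma(l)$, and each internal vertex $v$ (not a leaf, not $\rho$) with children $v_1,v_2$ gets index $\sigma(v):=-\max\{\mu(v_1),\mu(v_2)\}$. Let $T^i:=T|_{\{\rho,l_0,\dots,l_i\}}$. Agreement forests. A forest $\mathcal F=\{C_1,\dots,C_k\}$ of trees with pairwise disjoint label sets agrees with a tree $T$ over $L$ if (i) for each $C_i$, $T|_{L(C_i)}$ is isomorphic to $C_i$ (label-preserving); (ii) the subtrees $T(L(C_i))$ are pairwise vertex-disjoint; (iii) $\bigcup_i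 L(C_i)=L$. $\mathcal F$ is an agreement forest for a set $\mathcal T$ of trees if it agrees with every $T\in\mathcal T$. The inheritance graph $G(\mathcal T,\mathcal F)$ is the directed graph on vertex set $\mathcal F$ with an edge $(C_i,C_j)$, $i\neq j$, iff some $T\in\mathcal T$ contains a directed (root-to-leaf direction) path from the root of $T(L(C_i))$ to the root of $T(L(C_j))$. $\mathcal F$ is an acyclic agreement forest (AAF) if additionally $G(\mathcal T,\mathcal F)$ has no directed cycle. *)

theory Defs
  imports Main
begin

text \<open>
  A rooted tree in which every non-leaf vertex other than the
  top vertex rho has two children (and rho has one child) is, up to label-preserving
  isomorphism, determined by the family of its clusters, and distinct vertices have distinct
  clusters.  We therefore represent such a tree by its set of clusters
  (a set of label sets): the vertex v is represented by cl(v) = L(T_v).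
  The top vertex rho has cluster L, the root r(T) has cluster L - {rho}, a leaf l has
  cluster {l}.  u is an ancestor of w (there is a directed root-to-leaf path from u to w)
  iff cl(w) is a subset of cl(u).  Label-preserving isomorphism of such trees is equality
  of cluster families.
\<close>

type_synonym 'a ctree = "'a set set"

definition labels :: "'a ctree \<Rightarrow> 'a set" where
  "labels T = \<Union> T"

definition is_tree :: "'a set \<Rightarrow> 'a \<Rightarrow> 'a ctree \<Rightarrow> bool" where
  "is_tree L \<rho> T \<longleftrightarrow>
     finite L \<and> \<rho> \<in> L \<and> L - {\<rho>} \<noteq> {} \<and>
     (\<forall>c\<in>T. c \<subseteq> L \<and> c \<noteq> {}) \<and>
     L \<in> T \<and> L - {\<rho>} \<in> T \<and>
     (\<forall>c\<in>T. c \<noteq> L \<longrightarrow> \<rho> \<notin> c) \<and>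
     (\<forall>l\<in>L - {\<rho>}. {l} \<in> T) \<and>
     (\<forall>c\<in>T. \<forall>d\<in>T. c \<subseteq> d \<or> d \<subseteq> c \<or> c \<inter> d = {}) \<and>
     (\<forall>c\<in>T. c \<noteq> L \<and> card c \<ge> 2 \<longrightarrow>
        (\<exists>c1\<in>T. \<exists>c2\<in>T. c1 \<noteq> {} \<and> c2 \<noteq> {} \<and> c1 \<inter> c2 = {} \<and> c1 \<union> c2 = c))"

text \<open>The restriction T|_S (obtained from T(S) by suppressing unlabelled vertices with
  fewer than two children).\<close>
definition restrict :: "'a ctree \<Rightarrow> 'a set \<Rightarrow> 'a ctree" where
  "restrict T S = {c \<inter> S | c. c \<in> T \<and> c \<inter> S \<noteq> {}}"

definition subtree :: "'a ctree \<Rightarrow> 'a set \<Rightarrow> 'a ctree" where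
  "subtree T v = {c \<in> T. c \<subseteq> v}"

definition span_root :: "'a ctree \<Rightarrow> 'a set \<Rightarrow> 'a set" where
  "span_root T S = (THE c. c \<in> T \<and> S \<subseteq> c \<and> (\<forall>d\<in>T. S \<subseteq> d \<longrightarrow> c \<subseteq> d))"

text \<open>Vertex set of T(S), the smallest subtree containing all vertices labelled by S.\<close>
definition span_vertices :: "'a ctree \<Rightarrow> 'a set \<Rightarrow> 'a set set" where
  "span_vertices T S = {c \<in> T. c \<subseteq> span_root T S \<and> c \<inter> S \<noteq> {}}"

definition agrees :: "'a set \<Rightarrow> 'a ctree set \<Rightarrow> 'a ctree \<Rightarrow> bool" where
  "agrees L F T \<longleftrightarrow>
     (\<forall>C\<in>F. C \<noteq> {}) \<and>
     (\<forall>C\<in>F. \<forall>D\<in>F. C \<noteq> D \<longrightarrow> labels C \<inter> labels D = {}) \<and>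
     (\<forall>C\<in>F. restrict T (labels C) = C) \<and>
     (\<forall>C\<in>F. \<forall>D\<in>F. C \<noteq> D \<longrightarrow> span_vertices T (labels C) \<inter> span_vertices T (labels D) = {}) \<and>
     \<Union> (labels ` F) = L"

definition agreement_forest :: "'a set \<Rightarrow> 'a ctree set \<Rightarrow> 'a ctree set \<Rightarrow> bool" where
  "agreement_forest L Ts F \<longleftrightarrow> (\<forall>T\<in>Ts. agrees L F T)"

definition inh_edge :: "'a ctree set \<Rightarrow> 'a ctree set \<Rightarrow> 'a ctree \<Rightarrow> 'a ctree \<Rightarrow> bool" where
  "inh_edge Ts F C D \<longleftrightarrow> C \<in> F \<and> D \<in> F \<and> C \<noteq> D \<and>
     (\<exists>T\<in>Ts. span_root T (labels D) \<subseteq> span_root T (labels C))"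

definition inh_graph :: "'a ctree set \<Rightarrow> 'a ctree set \<Rightarrow> ('a ctree \<times> 'a ctree) set" where
  "inh_graph Ts F = {(C, D). inh_edge Ts F C D}"

definition AAF :: "'a set \<Rightarrow> 'a ctree set \<Rightarrow> 'a ctree set \<Rightarrow> bool" where
  "AAF L Ts F \<longleftrightarrow> agreement_forest L Ts F \<and> acyclic (inh_graph Ts F)"

definition topological_ordering :: "'a ctree set \<Rightarrow> 'a ctree set \<Rightarrow> 'a ctree list \<Rightarrow> bool" where
  "topological_ordering Ts F Cs \<longleftrightarrow> distinct Cs \<and> set Cs = F \<and>
     (\<forall>a < length Cs. \<forall>b < length Cs. inh_edge Ts F (Cs ! a) (Cs ! b) \<longrightarrow> a < b)"

definition leaf_ordering :: "'a set \<Rightarrow> 'a \<Rightarrow> ('a \<Rightarrow> nat) \<Rightarrow> bool" where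
  "leaf_ordering L \<rho> \<sigma> \<longleftrightarrow> bij_betw \<sigma> (L - {\<rho>}) {0..<card (L - {\<rho>})}"

definition leaf_at :: "'a set \<Rightarrow> 'a \<Rightarrow> ('a \<Rightarrow> nat) \<Rightarrow> nat \<Rightarrow> 'a" where
  "leaf_at L \<rho> \<sigma> k = the_inv_into (L - {\<rho>}) \<sigma> k"

definition T_up :: "'a set \<Rightarrow> 'a \<Rightarrow> ('a \<Rightarrow> nat) \<Rightarrow> 'a ctree \<Rightarrow> nat \<Rightarrow> 'a ctree" where
  "T_up L \<rho> \<sigma> T k = restrict T (insert \<rho> (leaf_at L \<rho> \<sigma> ` {0..k}))"

definition children :: "'a ctree \<Rightarrow> 'a set \<Rightarrow> 'a set set" where
  "children T v = {d \<in> T. d \<subset> v \<and> \<not> (\<exists>e\<in>T. d \<subset> e \<and> e \<subset> v)}"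

definition mu :: "'a \<Rightarrow> ('a \<Rightarrow> nat) \<Rightarrow> 'a set \<Rightarrow> nat" where
  "mu \<rho> \<sigma> v = Min (\<sigma> ` (v - {\<rho>}))"

definition idx :: "'a \<Rightarrow> ('a \<Rightarrow> nat) \<Rightarrow> 'a ctree \<Rightarrow> 'a set \<Rightarrow> int" where
  "idx \<rho> \<sigma> T v = (if children T v = {} then int (\<sigma> (the_elem v))
                    else - int (Max (mu \<rho> \<sigma> ` children T v)))"

end

theory Submission
  imports Defs
begin

text \<open>
  In every tree T the sought vertex is the cluster X = {l_s, ..., l_j} \<inter> L(C_i) itself.
  Let r be the lowest common ancestor of X in T.  A leaf of r that belongs to an earlier
  component C_b (b < i) is impossible: the root of T(L(C_b)) is comparable with r, so either
  r lies in T(L(C_b)), contradicting vertex-disjointness, or it lies below r and hence below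
  the root of T(L(C_i)), giving an inheritance edge against the topological order.  Leaves of
  later components, and leaves of C_i before l_s, have \<sigma>-index outside [s, j].  Hence
  r \<inter> {\<rho>, l_0, ..., l_j} = X, so the subtree of T^j at X is T|_X = C_i|_X, the same
  cluster family for every T; OLA indices only depend on that subtree.
\<close>

definition laminar :: "'a set set \<Rightarrow> bool" where
  "laminar T \<longleftrightarrow> (\<forall>c\<in>T. \<forall>d\<in>T. c \<subseteq> d \<or> d \<subseteq> c \<or> c \<inter> d = {})"

lemma is_tree_laminar: "is_tree L \<rho> T \<Longrightarrow> laminar T"
  unfolding is_tree_def laminar_def by blast

lemma laminar_span_root:
  assumes lam: "laminar T" and U: "U \<in> T" "finite U" and Y: "Y \<subseteq> U" "Y \<noteq> {}"
  shows "span_root T Y \<in> T" "Y \<subseteq> span_root T Y"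
    and "\<And>d. d \<in> T \<Longrightarrow> Y \<subseteq> d \<Longrightarrow> span_root T Y \<subseteq> d"
proof -
  have "\<exists>c. (c \<in> T \<and> Y \<subseteq> c \<and> c \<subseteq> U) \<and>
      (\<forall>d. d \<in> T \<and> Y \<subseteq> d \<and> d \<subseteq> U \<longrightarrow> card c \<le> card d)"
    by (rule ex_has_least_nat[where k = U]) (simp add: U Y)
  then obtain c where c: "c \<in> T" "Y \<subseteq> c" "c \<subseteq> U"
    and c_least: "\<And>d. d \<in> T \<Longrightarrow> Y \<subseteq> d \<Longrightarrow> d \<subseteq> U \<Longrightarrow> card c \<le> card d"
    by blast
  have c_min: "c \<subseteq> d" if d: "d \<in> T" "Y \<subseteq> d" for d
  proof (rule ccontr)
    assume "\<not> c \<subseteq> d"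
    moreover have "c \<inter> d \<noteq> {}" using c(2) d(2) Y(2) by blast
    ultimately have "d \<subset> c" using lam c(1) d(1) unfolding laminar_def by blast
    moreover have "finite c" using c(3) U(2) by (rule finite_subset)
    ultimately have "card d < card c" by (rule psubset_card_mono[rotated])
    moreover have "card c \<le> card d" using c_least d \<open>d \<subset> c\<close> c(3) by blast
    ultimately show False by simp
  qed
  have "\<exists>!c. c \<in> T \<and> Y \<subseteq> c \<and> (\<forall>d\<in>T. Y \<subseteq> d \<longrightarrow> c \<subseteq> d)"
    using c c_min by (blast intro: subset_antisym)
  from theI'[OF this] show "span_root T Y \<in> T" "Y \<subseteq> span_root T Y"
    "\<And>d. d \<in> T \<Longrightarrow> Y \<subseteq> d \<Longrightarrow> span_root T Y \<subseteq> d"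
    unfolding span_root_def by blast+
qed

lemma is_tree_span_root:
  assumes "is_tree L \<rho> T" "Y \<subseteq> L" "Y \<noteq> {}"
  shows "span_root T Y \<in> T" "Y \<subseteq> span_root T Y"
    and "\<And>d. d \<in> T \<Longrightarrow> Y \<subseteq> d \<Longrightarrow> span_root T Y \<subseteq> d"
  using laminar_span_root[OF is_tree_laminar[OF assms(1)], of L Y] assms
  unfolding is_tree_def by auto

lemma leaf_at:
  assumes "leaf_ordering L \<rho> \<sigma>" "k < card (L - {\<rho>})"
  shows "leaf_at L \<rho> \<sigma> k \<in> L - {\<rho>}" "\<sigma> (leaf_at L \<rho> \<sigma> k) = k"
proof -
  have inj: "inj_on \<sigma> (L - {\<rho>})" and k: "k \<in> \<sigma> ` (L - {\<rho>})"
    using assms unfolding leaf_ordering_def bij_betw_def by auto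
  show "leaf_at L \<rho> \<sigma> k \<in> L - {\<rho>}" "\<sigma> (leaf_at L \<rho> \<sigma> k) = k"
    unfolding leaf_at_def using the_inv_into_into[OF inj k order.refl] f_the_inv_into_f[OF inj k]
    by simp_all
qed

lemma restrict_of_restrict:
  assumes "X \<subseteq> A" shows "restrict (restrict T A) X = restrict T X"
proof -
  have inter: "c \<inter> A \<inter> X = c \<inter> X" for c using assms by blast
  have "restrict (restrict T A) X = {c \<inter> A \<inter> X | c. c \<in> T \<and> c \<inter> A \<inter> X \<noteq> {}}"
    unfolding restrict_def by blast
  also have "\<dots> = restrict T X"
    unfolding restrict_def inter ..
  finally show ?thesis .
qed

lemma subtree_restrict:
  assumes lam: "laminar T" and r: "r \<in> T" "X \<subseteq> r" "r \<inter> S = X" "X \<noteq> {}"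
  shows "X \<in> restrict T S" "subtree (restrict T S) X = restrict T X"
proof -
  show "X \<in> restrict T S" unfolding restrict_def using r by blast
  show "subtree (restrict T S) X = restrict T X"
  proof (rule set_eqI, rule iffI)
    fix d assume "d \<in> subtree (restrict T S) X"
    then obtain c where c: "c \<in> T" "d = c \<inter> S" "c \<inter> S \<noteq> {}" "c \<inter> S \<subseteq> X"
      unfolding subtree_def restrict_def by auto
    then have "c \<inter> X = c \<inter> S" using r by blast
    then show "d \<in> restrict T X" using c unfolding restrict_def by auto
  next
    fix d assume "d \<in> restrict T X"
    then obtain c where c: "c \<in> T" "d = c \<inter> X" "c \<inter> X \<noteq> {}"
      unfolding restrict_def by auto
    have "c \<subseteq> r \<or> r \<subseteq> c"
      using lam c r unfolding laminar_def by blast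
    then have "d = c \<inter> S \<or> d = r \<inter> S" using c r by blast
    then show "d \<in> subtree (restrict T S) X"
      using c r unfolding subtree_def restrict_def by auto
  qed
qed

lemma labels_subtree: "v \<in> T \<Longrightarrow> labels (subtree T v) = v"
  unfolding labels_def subtree_def by auto

lemma idx_subtree:
  assumes "v \<subseteq> X" shows "idx \<rho> \<sigma> (subtree T X) v = idx \<rho> \<sigma> T v"
proof -
  have "d \<in> subtree T X \<longleftrightarrow> d \<in> T" if "d \<subset> v" for d
    using that assms unfolding subtree_def by auto
  then have "children (subtree T X) v = children T v"
    unfolding children_def by (metis (lifting) psubset_trans)
  then show ?thesis unfolding idx_def by simp
qed

lemma idx_subtree_cong:
  assumes "subtree T x = subtree T' x'" "v \<in> subtree T x" "v' \<in> subtree T' x'"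
    and "labels (subtree T v) = labels (subtree T' v')"
  shows "idx \<rho> \<sigma> T v = idx \<rho> \<sigma> T' v'"
proof -
  have v: "v \<in> T" "v \<subseteq> x" and v': "v' \<in> T'" "v' \<subseteq> x'"
    using assms(2,3) unfolding subtree_def by auto
  then have "v' = v" using assms(4) labels_subtree by metis
  then show ?thesis
    using assms(1) idx_subtree[OF v(2), of \<rho> \<sigma> T] idx_subtree[OF v'(2), of \<rho> \<sigma> T'] by simp
qed

lemma span_root_label_from_later_component:
  assumes tree: "is_tree L \<rho> T" and T: "T \<in> Ts" and ag: "agrees L (set Cs) T"
    and topo: "topological_ordering Ts (set Cs) Cs"
    and a: "a < length Cs" and X: "X \<subseteq> labels (Cs ! a)" "X \<noteq> {}"
    and b: "b < length Cs" "b \<noteq> a"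
    and y: "y \<in> span_root T X" "y \<in> labels (Cs ! b)"
  shows "a < b"
proof -
  let ?A = "labels (Cs ! a)" and ?D = "labels (Cs ! b)"
  have mem: "Cs ! a \<in> set Cs" "Cs ! b \<in> set Cs" using a b by simp_all
  then have AL: "?A \<subseteq> L" and DL: "?D \<subseteq> L"
    using ag unfolding agrees_def by blast+
  have CD: "Cs ! a \<noteq> Cs ! b"
    using topo a b unfolding topological_ordering_def by (simp add: nth_eq_iff_index_eq)
  define rX rA rD where "rX = span_root T X" and "rA = span_root T ?A" and "rD = span_root T ?D"
  have XL: "X \<subseteq> L" and A_ne: "?A \<noteq> {}" and D_ne: "?D \<noteq> {}"
    using X AL y by blast+
  note rX = is_tree_span_root[OF tree XL X(2), folded rX_def]
    and rA = is_tree_span_root[OF tree AL A_ne, folded rA_def]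
    and rD = is_tree_span_root[OF tree DL D_ne, folded rD_def]
  have rX_rA: "rX \<subseteq> rA" using rX(3) rA(1,2) X(1) by blast
  have y_rD: "y \<in> rD" using rD(2) y(2) by blast
  have "rX \<subseteq> rD \<or> rD \<subseteq> rX"
    using is_tree_laminar[OF tree] rX(1) rD(1) y(1) y_rD unfolding laminar_def rX_def by blast
  then show ?thesis
  proof
    assume "rX \<subseteq> rD"
    then have "rX \<in> span_vertices T ?A \<inter> span_vertices T ?D"
      unfolding span_vertices_def rA_def[symmetric] rD_def[symmetric]
      using rX rX_rA X y rX_def by blast
    moreover have "span_vertices T ?A \<inter> span_vertices T ?D = {}"
      using ag mem CD unfolding agrees_def by blast
    ultimately show ?thesis by blast
  next
    assume "rD \<subseteq> rX"
    then have "span_root T ?D \<subseteq> span_root T ?A" using rX_rA unfolding rA_def rD_def by blast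
    then have "inh_edge Ts (set Cs) (Cs ! a) (Cs ! b)"
      unfolding inh_edge_def using mem CD T by blast
    then show ?thesis using topo a b unfolding topological_ordering_def by blast
  qed
qed

context
  fixes L :: "'a set" and \<rho> :: 'a and \<sigma> :: "'a \<Rightarrow> nat" and Ts :: "'a ctree set" and T :: "'a ctree"
    and Cs :: "'a ctree list" and i j :: nat and A X :: "'a set"
  defines "A \<equiv> labels (Cs ! i)"
    and "X \<equiv> leaf_at L \<rho> \<sigma> ` {mu \<rho> \<sigma> A..j} \<inter> A"
  assumes tree: "is_tree L \<rho> T" and T: "T \<in> Ts" and ag: "agrees L (set Cs) T"
    and topo: "topological_ordering Ts (set Cs) Cs" and lo: "leaf_ordering L \<rho> \<sigma>"
    and sep: "\<forall>a b. a < b \<and> b < length Cs \<longrightarrow>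
               (\<forall>l\<in>labels (Cs ! a) - {\<rho>}. \<forall>l'\<in>labels (Cs ! b) - {\<rho>}. \<sigma> l < \<sigma> l')"
    and i: "i < length Cs"
    and j: "j < card (L - {\<rho>})" "leaf_at L \<rho> \<sigma> j \<in> A" and sj: "mu \<rho> \<sigma> A \<le> j"
begin

lemma span_root_inter_prefix: "span_root T X \<inter> insert \<rho> (leaf_at L \<rho> \<sigma> ` {0..j}) = X"
proof -
  let ?l = "leaf_at L \<rho> \<sigma>" and ?r = "span_root T X"
  have finL: "finite L" and rootL: "L - {\<rho>} \<in> T"
    using tree unfolding is_tree_def by auto
  have A_labels: "\<Union> (labels ` set Cs) = L" "A \<in> labels ` set Cs"
    using ag i unfolding agrees_def A_def by auto
  then have finA: "finite A" using finL by (metis Union_upper finite_subset)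
  have lj: "?l j \<in> X" "?l j \<in> L - {\<rho>}" "\<sigma> (?l j) = j"
    using leaf_at[OF lo j(1)] j(2) sj unfolding X_def by auto
  have XL: "X \<subseteq> L - {\<rho>}"
    unfolding X_def using leaf_at(1)[OF lo] j(1) by fastforce
  have r_root: "?r \<subseteq> L - {\<rho>}"
    using is_tree_span_root(3)[OF tree _ _ rootL] XL lj(1) by blast
  have "y \<in> X" if y: "y \<in> ?r" "y = ?l k" "k \<le> j" for y k
  proof -
    have y_leaf: "y \<in> L - {\<rho>}" "\<sigma> y = k"
      using y r_root leaf_at(2)[OF lo, of k] j(1) by auto
    then obtain b where b: "b < length Cs" "y \<in> labels (Cs ! b)"
      using A_labels(1) by (metis DiffD1 UN_E in_set_conv_nth)
    have "y \<in> A"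
    proof (rule ccontr)
      assume "y \<notin> A"
      then have "b \<noteq> i" using b(2) unfolding A_def by blast
      moreover have "X \<subseteq> labels (Cs ! i)" "X \<noteq> {}"
        using lj(1) unfolding X_def A_def by blast+
      ultimately have "i < b"
        using span_root_label_from_later_component[OF tree T ag topo i] b y(1) by blast
      then have "\<sigma> (?l j) < \<sigma> y"
        using sep b j(2) lj(2) y_leaf(1) unfolding A_def by blast
      then show False using lj(3) y_leaf(2) y(3) by simp
    qed
    moreover have "mu \<rho> \<sigma> A \<le> k"
      unfolding mu_def using \<open>y \<in> A\<close> y_leaf finA by (intro Min_le) auto
    ultimately show ?thesis unfolding X_def using y by auto
  qed
  moreover have "X \<subseteq> ?r"
    using is_tree_span_root(2)[OF tree] XL lj(1) by blast
  moreover have "X \<subseteq> insert \<rho> (?l ` {0..j})" unfolding X_def by auto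
  ultimately show ?thesis using r_root by auto
qed

lemma T_up_subtree_component:
  "X \<in> T_up L \<rho> \<sigma> T j" "subtree (T_up L \<rho> \<sigma> T j) X = restrict (Cs ! i) X"
proof -
  have "A \<in> labels ` set Cs" "restrict T A = Cs ! i" "\<Union> (labels ` set Cs) = L"
    using ag i unfolding agrees_def A_def by auto
  moreover have "X \<noteq> {}" "X \<subseteq> A"
    using j(2) sj unfolding X_def by (auto intro!: rev_image_eqI[of j])
  moreover from calculation have "X \<subseteq> span_root T X" "span_root T X \<in> T"
    using is_tree_span_root(1,2)[OF tree, of X] by blast+
  ultimately show "X \<in> T_up L \<rho> \<sigma> T j" "subtree (T_up L \<rho> \<sigma> T j) X = restrict (Cs ! i) X"
    using span_root_inter_prefix subtree_restrict[OF is_tree_laminar[OF tree]]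
      restrict_of_restrict[of X A T]
    unfolding T_up_def by auto
qed

end

theorem lemma1:
  fixes L :: "'a set" and \<rho> :: 'a and Ts :: "'a ctree set" and Cs :: "'a ctree list"
    and \<sigma> :: "'a \<Rightarrow> nat" and i j :: nat
  assumes trees: "\<forall>T\<in>Ts. is_tree L \<rho> T"
    and two: "card Ts \<ge> 2"
    and aaf: "AAF L Ts (set Cs)"
    and topo: "topological_ordering Ts (set Cs) Cs"
    and lo: "leaf_ordering L \<rho> \<sigma>"
    and sep: "\<forall>a b. a < b \<and> b < length Cs \<longrightarrow>
               (\<forall>l\<in>labels (Cs ! a) - {\<rho>}. \<forall>l'\<in>labels (Cs ! b) - {\<rho>}. \<sigma> l < \<sigma> l')"
    and i: "i < length Cs" "labels (Cs ! i) - {\<rho>} \<noteq> {}"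
    and j: "j < card (L - {\<rho>})" "leaf_at L \<rho> \<sigma> j \<in> labels (Cs ! i)"
    and sj: "Min (\<sigma> ` (labels (Cs ! i) - {\<rho>})) \<le> j"
  shows "\<exists>x. (\<forall>T\<in>Ts. x T \<in> T_up L \<rho> \<sigma> T j \<and>
              subtree (T_up L \<rho> \<sigma> T j) (x T) =
                restrict (Cs ! i) (leaf_at L \<rho> \<sigma> ` {Min (\<sigma> ` (labels (Cs ! i) - {\<rho>}))..j}
                                   \<inter> labels (Cs ! i))) \<and>
             (\<forall>T\<in>Ts. \<forall>T'\<in>Ts. \<forall>v\<in>subtree (T_up L \<rho> \<sigma> T j) (x T).
                \<forall>v'\<in>subtree (T_up L \<rho> \<sigma> T' j) (x T').
                labels (subtree (T_up L \<rho> \<sigma> T j) v) = labels (subtree (T_up L \<rho> \<sigma> T' j) v') \<longrightarrow>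
                idx \<rho> \<sigma> (T_up L \<rho> \<sigma> T j) v = idx \<rho> \<sigma> (T_up L \<rho> \<sigma> T' j) v')"
proof -
  let ?X = "leaf_at L \<rho> \<sigma> ` {Min (\<sigma> ` (labels (Cs ! i) - {\<rho>}))..j} \<inter> labels (Cs ! i)"
  have at_X: "?X \<in> T_up L \<rho> \<sigma> T j" "subtree (T_up L \<rho> \<sigma> T j) ?X = restrict (Cs ! i) ?X"
    if T: "T \<in> Ts" for T
  proof -
    have "is_tree L \<rho> T" "agrees L (set Cs) T"
      using trees aaf T unfolding AAF_def agreement_forest_def by auto
    from T_up_subtree_component[OF this(1) T this(2) topo lo sep i(1) j sj[folded mu_def]]
    show "?X \<in> T_up L \<rho> \<sigma> T j" "subtree (T_up L \<rho> \<sigma> T j) ?X = restrict (Cs ! i) ?X"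
      unfolding mu_def by blast+
  qed
  show ?thesis
  proof (rule exI[of _ "\<lambda>_. ?X"], intro conjI ballI impI)
    fix T assume "T \<in> Ts"
    then show "?X \<in> T_up L \<rho> \<sigma> T j" "subtree (T_up L \<rho> \<sigma> T j) ?X = restrict (Cs ! i) ?X"
      by (fact at_X)+
  next
    fix T T' v v' assume T: "T \<in> Ts" "T' \<in> Ts"
      and v: "v \<in> subtree (T_up L \<rho> \<sigma> T j) ?X" "v' \<in> subtree (T_up L \<rho> \<sigma> T' j) ?X"
      and same_labels: "labels (subtree (T_up L \<rho> \<sigma> T j) v) = labels (subtree (T_up L \<rho> \<sigma> T' j) v')"
    have "subtree (T_up L \<rho> \<sigma> T j) ?X = subtree (T_up L \<rho> \<sigma> T' j) ?X"
      using at_X(2)[OF T(1)] at_X(2)[OF T(2)] by simp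
    from idx_subtree_cong[OF this v same_labels]
    show "idx \<rho> \<sigma> (T_up L \<rho> \<sigma> T j) v = idx \<rho> \<sigma> (T_up L \<rho> \<sigma> T' j) v'" .
  qed
qed

end
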